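(* Let $k\in\mathbb{N}$ and let $M_\psi$ be a bounded multiplication operator on $\mathcal{L}^{(k)}$ or on $\mathcal{L}^{(k)}_0$. Then $M_\psi$ is bounded below if and only if $\inf_{v\in T}|\psi(v)|>0$.
   Context: $T$ is a tree (locally finite, connected, simply connected graph, identified with its vertex set) without terminal vertices, rooted at $o$. $|v|$ is the distance from $o$ to $v$; for $v\ne o$, $v^-$ is the parent of $v$. $T^*=T\setminus\{o\}$, $Df(v)=|f(v)-f(v^-)|$. For $x\ge1$: $\ell_0(x)=1$, $\ell_1(x)=1+\ln x$, $\ell_j(x)=1+\ln\ell_{j-1}(x)$ for $j\ge2$. $\mathcal{L}^{(k)}$ is the space of $f:T\to\mathbb{C}$ with $\sup_{v\in T^*}|v|\prod_{j=0}^{k-1}\ell_j(|v|)Df(v)<\infty$, normed by $\|f\|_k=|f(o)|+\sup_{v\in T^*}|v|\prod_{j=0}^{k-1}\ell_j(|v|)Df(v)$; $\mathcal{L}^{(k)}_0$ is its subspace of $f$ with $|v|\prod_{j=0}^{k-1}\ell_j(|v|)Df(v)\to0$ as $|v|\to\infty$. $M_\psi f=\psi f$. An operator $S$ on a Banach space $X$ is bounded below if there is $c>0$ with $\|Sx\|\ge c\|x\|$ for all $x\in X$. *)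

theory Defs
  imports "HOL-Analysis.Analysis"
begin

definition is_walk :: "'a set \<Rightarrow> ('a \<Rightarrow> 'a \<Rightarrow> bool) \<Rightarrow> 'a \<Rightarrow> 'a \<Rightarrow> 'a list \<Rightarrow> bool" where
  "is_walk V E u v p \<longleftrightarrow> p \<noteq> [] \<and> hd p = u \<and> last p = v \<and> set p \<subseteq> V \<and>
     (\<forall>i. Suc i < length p \<longrightarrow> E (p ! i) (p ! Suc i))"

definition is_path :: "'a set \<Rightarrow> ('a \<Rightarrow> 'a \<Rightarrow> bool) \<Rightarrow> 'a \<Rightarrow> 'a \<Rightarrow> 'a list \<Rightarrow> bool" where
  "is_path V E u v p \<longleftrightarrow> is_walk V E u v p \<and> distinct p"

definition is_tree :: "'a set \<Rightarrow> ('a \<Rightarrow> 'a \<Rightarrow> bool) \<Rightarrow> bool" where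
  "is_tree V E \<longleftrightarrow>
     (\<forall>u v. E u v \<longrightarrow> u \<in> V \<and> v \<in> V) \<and> (\<forall>u v. E u v \<longrightarrow> E v u) \<and> (\<forall>u. \<not> E u u) \<and>
     (\<forall>u\<in>V. \<forall>v\<in>V. \<exists>!p. is_path V E u v p)"

definition locally_finite :: "'a set \<Rightarrow> ('a \<Rightarrow> 'a \<Rightarrow> bool) \<Rightarrow> bool" where
  "locally_finite V E \<longleftrightarrow> (\<forall>v\<in>V. finite {w. E v w})"

definition no_terminal_vertices :: "'a set \<Rightarrow> ('a \<Rightarrow> 'a \<Rightarrow> bool) \<Rightarrow> bool" where
  "no_terminal_vertices V E \<longleftrightarrow> (\<forall>v\<in>V. card {w. E v w} \<noteq> 1)"

definition tdist :: "'a set \<Rightarrow> ('a \<Rightarrow> 'a \<Rightarrow> bool) \<Rightarrow> 'a \<Rightarrow> 'a \<Rightarrow> nat" where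
  "tdist V E r v = (LEAST n. \<exists>p. is_walk V E r v p \<and> length p = Suc n)"

definition tparent :: "'a set \<Rightarrow> ('a \<Rightarrow> 'a \<Rightarrow> bool) \<Rightarrow> 'a \<Rightarrow> 'a \<Rightarrow> 'a" where
  "tparent V E r v = (THE w. E v w \<and> Suc (tdist V E r w) = tdist V E r v)"

definition Dop :: "'a set \<Rightarrow> ('a \<Rightarrow> 'a \<Rightarrow> bool) \<Rightarrow> 'a \<Rightarrow> ('a \<Rightarrow> complex) \<Rightarrow> 'a \<Rightarrow> real" where
  "Dop V E r f v = cmod (f v - f (tparent V E r v))"

fun ell :: "nat \<Rightarrow> real \<Rightarrow> real" where
  "ell 0 x = 1"
| "ell (Suc 0) x = 1 + ln x"
| "ell (Suc (Suc j)) x = 1 + ln (ell (Suc j) x)"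

definition weight :: "nat \<Rightarrow> nat \<Rightarrow> real" where
  "weight k n = real n * (\<Prod>j<k. ell j (real n))"

definition wD :: "'a set \<Rightarrow> ('a \<Rightarrow> 'a \<Rightarrow> bool) \<Rightarrow> 'a \<Rightarrow> nat \<Rightarrow> ('a \<Rightarrow> complex) \<Rightarrow> 'a \<Rightarrow> real" where
  "wD V E r k f v = weight k (tdist V E r v) * Dop V E r f v"

definition Lk :: "'a set \<Rightarrow> ('a \<Rightarrow> 'a \<Rightarrow> bool) \<Rightarrow> 'a \<Rightarrow> nat \<Rightarrow> ('a \<Rightarrow> complex) set" where
  "Lk V E r k = {f. bdd_above (wD V E r k f ` (V - {r}))}"

definition Lk0 :: "'a set \<Rightarrow> ('a \<Rightarrow> 'a \<Rightarrow> bool) \<Rightarrow> 'a \<Rightarrow> nat \<Rightarrow> ('a \<Rightarrow> complex) set" where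
  "Lk0 V E r k = {f. f \<in> Lk V E r k \<and>
      (\<forall>\<epsilon>>0. \<exists>N. \<forall>v\<in>V - {r}. N \<le> tdist V E r v \<longrightarrow> wD V E r k f v < \<epsilon>)}"

text \<open>The norm; 0 is inserted into the supremum only so that it is well defined
  when T* is empty (the values wD are nonnegative, so otherwise nothing changes).\<close>
definition Lnorm :: "'a set \<Rightarrow> ('a \<Rightarrow> 'a \<Rightarrow> bool) \<Rightarrow> 'a \<Rightarrow> nat \<Rightarrow> ('a \<Rightarrow> complex) \<Rightarrow> real" where
  "Lnorm V E r k f = cmod (f r) + Sup (insert 0 (wD V E r k f ` (V - {r})))"

definition mult_op :: "('a \<Rightarrow> complex) \<Rightarrow> ('a \<Rightarrow> complex) \<Rightarrow> 'a \<Rightarrow> complex" where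
  "mult_op \<psi> f = (\<lambda>v. \<psi> v * f v)"

definition bounded_mult_on :: "('a \<Rightarrow> complex) set \<Rightarrow> (('a \<Rightarrow> complex) \<Rightarrow> real) \<Rightarrow> ('a \<Rightarrow> complex) \<Rightarrow> bool" where
  "bounded_mult_on X nrm \<psi> \<longleftrightarrow> (\<forall>f\<in>X. mult_op \<psi> f \<in> X) \<and>
     (\<exists>C. \<forall>f\<in>X. nrm (mult_op \<psi> f) \<le> C * nrm f)"

definition bounded_below_on :: "('a \<Rightarrow> complex) set \<Rightarrow> (('a \<Rightarrow> complex) \<Rightarrow> real) \<Rightarrow> (('a \<Rightarrow> complex) \<Rightarrow> ('a \<Rightarrow> complex)) \<Rightarrow> bool" where
  "bounded_below_on X nrm S \<longleftrightarrow> (\<exists>c>0. \<forall>f\<in>X. nrm (S f) \<ge> c * nrm f)"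

end

theory Submission
  imports Defs
begin

(* If M_psi is bounded below by c > 0, testing it on the indicator of a vertex u, on which
   M_psi acts as the scalar psi(u), gives |psi(u)| >= c.
   Conversely, let |psi| >= c > 0 and g = psi f. At a vertex v with parent p,
     f(v) - f(p) = (g(v) - g(p)) / psi(v) + g(p) (psi(p) - psi(v)) / (psi(v) psi(p)).
   The first term is controlled by the norm of g. The numerator g(p) (psi(v) - psi(p)) of the
   second is the difference at v of psi h, where h is g with its value at v replaced by g(p);
   as the weights of consecutive levels differ by a factor at most 2^(k+1), the norm of h is at
   most (1 + 2^(k+1)) times that of g, so boundedness of M_psi controls the second term too. *)

lemma is_walk_iff_successively:
  "is_walk V E u v p \<longleftrightarrow> p \<noteq> [] \<and> hd p = u \<and> last p = v \<and> set p \<subseteq> V \<and> successively E p"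
  by (simp add: is_walk_def successively_conv_nth)

lemma is_walk_snoc:
  assumes "is_walk V E u w p" "E w v" "v \<in> V"
  shows "is_walk V E u v (p @ [v])"
  using assms by (auto simp: is_walk_iff_successively successively_append_iff)

lemma is_walk_butlast:
  assumes "is_walk V E u v p" "2 \<le> length p"
  shows "is_walk V E u (last (butlast p)) (butlast p)" "E (last (butlast p)) v"
proof -
  have ne: "butlast p \<noteq> []"
    using assms(2) by (cases p rule: rev_cases) auto
  have p: "p = butlast p @ [v]"
    using assms(1) by (auto simp: is_walk_iff_successively)
  have "hd (butlast p) = u"
    using assms(1) ne p by (metis hd_append2 is_walk_iff_successively)
  moreover have "set (butlast p) \<subseteq> V"
    using assms in_set_butlastD by (fastforce simp: is_walk_iff_successively)
  moreover have "successively E (butlast p @ [v])"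
    using assms p by (simp add: is_walk_iff_successively)
  ultimately show "is_walk V E u (last (butlast p)) (butlast p)" "E (last (butlast p)) v"
    using ne by (auto simp: is_walk_iff_successively successively_append_iff)
qed

lemma is_walk_shorten:
  assumes "is_walk V E u v p" "\<not> distinct p"
  obtains q where "is_walk V E u v q" "length q < length p"
proof -
  obtain xs ys zs y where p: "p = xs @ [y] @ ys @ [y] @ zs"
    using not_distinct_decomp[OF assms(2)] by blast
  have "successively E (xs @ [y] @ ys @ [y] @ zs)"
    using assms(1) p by (simp add: is_walk_iff_successively)
  then have "successively E (xs @ [y]) \<and> successively E ([y] @ zs)"
    by (metis append_assoc successively_append_iff)
  then have "successively E (xs @ [y] @ zs)"
    by (auto simp: successively_append_iff)
  moreover have "hd (xs @ [y] @ zs) = hd p" "last (xs @ [y] @ zs) = last p"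
    by (cases xs; simp add: p) (cases zs; simp add: p)
  ultimately have "is_walk V E u v (xs @ [y] @ zs)"
    using assms(1) by (auto simp: is_walk_iff_successively p)
  then show thesis by (rule that) (simp add: p)
qed

lemma tdist_less_length:
  assumes "is_walk V E u v p"
  shows "tdist V E u v < length p"
proof -
  have "length p = Suc (length p - 1)"
    using assms by (cases p) (auto simp: is_walk_iff_successively)
  then have "tdist V E u v \<le> length p - 1"
    unfolding tdist_def using assms by (intro Least_le) blast
  with assms show ?thesis by (cases p) (auto simp: is_walk_iff_successively)
qed

lemma shortest_walk:
  assumes "is_walk V E u v p"
  obtains q where "is_walk V E u v q" "length q = Suc (tdist V E u v)"
proof -
  have "\<exists>n q. is_walk V E u v q \<and> length q = Suc n"
    using assms by (intro exI[of _ "length p - 1"] exI[of _ p]) (auto simp: is_walk_iff_successively)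
  from LeastI_ex[OF this] show thesis
    using that unfolding tdist_def by blast
qed

lemma shortest_walk_distinct:
  assumes "is_walk V E u v p" "length p = Suc (tdist V E u v)"
  shows "distinct p"
  using is_walk_shorten[OF assms(1)] tdist_less_length assms(2) by (metis not_less_eq)

lemma neighbour_closer_to_root:
  assumes sym: "\<And>x y. E x y \<Longrightarrow> E y x" and p: "is_walk V E r v p" and "v \<noteq> r"
  obtains w where "E v w" "Suc (tdist V E r w) = tdist V E r v"
proof -
  obtain q where q: "is_walk V E r v q" "length q = Suc (tdist V E r v)"
    using shortest_walk[OF p] .
  have "2 \<le> length q"
    using q(1) \<open>v \<noteq> r\<close> by (cases q) (auto simp: is_walk_iff_successively Suc_le_eq)
  define w where "w = last (butlast q)"
  have w: "is_walk V E r w (butlast q)" "E w v"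
    using is_walk_butlast[OF q(1) \<open>2 \<le> length q\<close>] by (simp_all add: w_def)
  obtain s where s: "is_walk V E r w s" "length s = Suc (tdist V E r w)"
    using shortest_walk[OF w(1)] .
  have "v \<in> V"
    using p by (auto simp: is_walk_iff_successively)
  have "Suc (tdist V E r w) \<le> tdist V E r v"
    using tdist_less_length[OF w(1)] q(2) by simp
  moreover have "tdist V E r v < Suc (Suc (tdist V E r w))"
    using tdist_less_length[OF is_walk_snoc[OF s(1) w(2) \<open>v \<in> V\<close>]] s(2) by simp
  ultimately show thesis
    using that sym[OF w(2)] by simp
qed

locale rooted_tree =
  fixes V :: "'a set" and E :: "'a \<Rightarrow> 'a \<Rightarrow> bool" and r :: 'a
  assumes tree: "is_tree V E" and root: "r \<in> V"
begin

abbreviation "dst \<equiv> tdist V E r"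
abbreviation "par \<equiv> tparent V E r"

lemma edge_sym: "E u v \<Longrightarrow> E v u"
  using tree unfolding is_tree_def by blast

lemma edge_in_V: "E u v \<Longrightarrow> v \<in> V"
  using tree unfolding is_tree_def by blast

lemma unique_path: "v \<in> V \<Longrightarrow> \<exists>!p. is_path V E r v p"
  using tree root unfolding is_tree_def by blast

lemma walk_from_root:
  assumes "v \<in> V"
  obtains p where "is_walk V E r v p"
  using unique_path[OF assms] unfolding is_path_def by blast

lemma closer_neighbour_unique:
  assumes v: "v \<in> V"
    and w1: "E v w1" "Suc (dst w1) = dst v"
    and w2: "E v w2" "Suc (dst w2) = dst v"
  shows "w1 = w2"
proof -
  have "\<exists>q. is_path V E r v (q @ [v]) \<and> last q = w" if "E v w" "Suc (dst w) = dst v" for w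
  proof -
    obtain q where q: "is_walk V E r w q" "length q = Suc (dst w)"
      using walk_from_root[OF edge_in_V[OF \<open>E v w\<close>]] shortest_walk by metis
    have "is_walk V E r v (q @ [v])"
      using is_walk_snoc[OF q(1) edge_sym[OF \<open>E v w\<close>] v] .
    moreover have "distinct (q @ [v])"
      using shortest_walk_distinct[OF calculation] q(2) that(2) by simp
    moreover have "last q = w"
      using q(1) by (simp add: is_walk_iff_successively)
    ultimately show ?thesis
      unfolding is_path_def by blast
  qed
  then obtain q1 q2 where "is_path V E r v (q1 @ [v])" "last q1 = w1"
    and "is_path V E r v (q2 @ [v])" "last q2 = w2"
    using w1 w2 by metis
  with unique_path[OF v] show ?thesis by auto
qed

lemma parent:
  assumes "v \<in> V" "v \<noteq> r"
  shows "E v (par v)" "Suc (dst (par v)) = dst v"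
proof -
  obtain w where w: "E v w" "Suc (dst w) = dst v"
    using walk_from_root[OF assms(1)] neighbour_closer_to_root edge_sym assms(2) by metis
  have "E v (par v) \<and> Suc (dst (par v)) = dst v"
    unfolding tparent_def
    by (rule theI[of _ w]) (use w closer_neighbour_unique[OF assms(1)] in blast)+
  then show "E v (par v)" "Suc (dst (par v)) = dst v" by blast+
qed

lemma parent_in_V: "v \<in> V \<Longrightarrow> v \<noteq> r \<Longrightarrow> par v \<in> V"
  using parent edge_in_V by blast

lemma dist_parent: "v \<in> V \<Longrightarrow> v \<noteq> r \<Longrightarrow> dst v = Suc (dst (par v))"
  using parent by simp

lemma parent_neq: "v \<in> V \<Longrightarrow> v \<noteq> r \<Longrightarrow> par v \<noteq> v"
  using dist_parent by force

lemma dist_pos: "v \<in> V \<Longrightarrow> v \<noteq> r \<Longrightarrow> 1 \<le> dst v"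
  using dist_parent by simp

lemma far_vertex_not_self_or_child:
  assumes "w \<in> V" "w \<noteq> r" "Suc (Suc (dst u)) \<le> dst w"
  shows "w \<noteq> u" "par w \<noteq> u"
  using assms dist_parent[OF assms(1,2)] by auto

end

lemma ell_ge_1: "1 \<le> x \<Longrightarrow> 1 \<le> ell j x"
  by (induction j x rule: ell.induct) auto

lemma ell_add_1_le: "1 \<le> x \<Longrightarrow> ell j (x + 1) \<le> 2 * ell j x"
proof (induction j x rule: ell.induct)
  case (1 x)
  then show ?case by simp
next
  case (2 x)
  have "ln (x + 1) \<le> ln (2 * x)"
    using 2 by simp
  also have "\<dots> = ln 2 + ln x"
    using 2 by (simp add: ln_mult)
  moreover have "0 \<le> ln x"
    using 2 by simp
  ultimately show ?case
    using ln_2_less_1 by simp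
next
  case (3 j x)
  have "1 \<le> ell (Suc j) x"
    using ell_ge_1 3(2) by blast
  moreover have "1 \<le> ell (Suc j) (x + 1)"
    using ell_ge_1 3(2) by simp
  ultimately have "ln (ell (Suc j) (x + 1)) \<le> ln (2 * ell (Suc j) x)"
    using 3 by simp
  also have "\<dots> = ln 2 + ln (ell (Suc j) x)"
    using \<open>1 \<le> ell (Suc j) x\<close> by (simp add: ln_mult)
  moreover have "0 \<le> ln (ell (Suc j) x)"
    using \<open>1 \<le> ell (Suc j) x\<close> by simp
  ultimately show ?case
    using ln_2_less_1 by simp
qed

lemma weight_pos:
  assumes "1 \<le> n"
  shows "0 < weight k n"
proof -
  have "0 < ell j (real n)" for j
    using ell_ge_1[of "real n" j] assms by simp
  with assms show ?thesis
    by (simp add: weight_def prod_pos)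
qed

lemma weight_nonneg: "0 \<le> weight k n"
  using weight_pos[of n k] by (cases n) (auto simp: weight_def)

lemma weight_Suc_le: "1 \<le> n \<Longrightarrow> weight k (Suc n) \<le> 2 ^ Suc k * weight k n"
proof -
  assume n: "1 \<le> n"
  have "(\<Prod>j<k. ell j (real (Suc n))) \<le> (\<Prod>j<k. 2 * ell j (real n))"
    using ell_ge_1[of "real (Suc n)"] ell_add_1_le[of "real n"] n
    by (intro prod_mono) (auto simp: add.commute intro: order_trans[OF zero_le_one])
  also have "\<dots> = 2 ^ k * (\<Prod>j<k. ell j (real n))"
    by (simp add: prod.distrib)
  finally have "real (Suc n) * (\<Prod>j<k. ell j (real (Suc n)))
      \<le> (2 * real n) * (2 ^ k * (\<Prod>j<k. ell j (real n)))"
    using n ell_ge_1[of "real (Suc n)"]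
    by (intro mult_mono prod_nonneg) (auto intro: order_trans[OF zero_le_one])
  then show ?thesis
    by (simp add: weight_def mult_ac)
qed

lemma norm_diff_divide_le:
  fixes a b x y :: "'a :: real_normed_field"
  assumes "0 < c" "c \<le> norm x" "c \<le> norm y"
  shows "norm (a / x - b / y) \<le> norm (a - b) / c + norm b * norm (x - y) / c\<^sup>2"
proof -
  have "x \<noteq> 0" "y \<noteq> 0"
    using assms by auto
  then have "a / x - b / y = (a - b) / x + b * (y - x) / (x * y)"
    by (simp add: field_simps)
  also have "norm \<dots> \<le> norm (a - b) / norm x + norm b * norm (x - y) / (norm x * norm y)"
    by (metis norm_triangle_ineq norm_divide norm_mult norm_minus_commute)
  also have "\<dots> \<le> norm (a - b) / c + norm b * norm (x - y) / c\<^sup>2"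
    using assms mult_mono[OF assms(2,3)]
    by (intro add_mono divide_left_mono) (auto simp: power2_eq_square intro!: mult_pos_pos)
  finally show ?thesis .
qed

locale weighted_tree = rooted_tree +
  fixes k :: nat
begin

abbreviation "W \<equiv> wD V E r k"
abbreviation "nrm \<equiv> Lnorm V E r k"
abbreviation "seminorm f \<equiv> Sup (insert 0 (W f ` (V - {r})))"

lemma wD_eq: "W f v = weight k (dst v) * cmod (f v - f (par v))"
  by (simp add: wD_def Dop_def)

lemma wD_nonneg: "0 \<le> W f v"
  by (simp add: wD_eq weight_nonneg)

lemma wD_le_seminorm: "f \<in> Lk V E r k \<Longrightarrow> v \<in> V - {r} \<Longrightarrow> W f v \<le> seminorm f"
  by (rule cSup_upper) (auto simp: Lk_def)

lemma seminorm_nonneg: "f \<in> Lk V E r k \<Longrightarrow> 0 \<le> seminorm f"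
  by (rule cSup_upper) (auto simp: Lk_def)

lemma seminorm_le: "(\<And>v. v \<in> V - {r} \<Longrightarrow> W f v \<le> B) \<Longrightarrow> 0 \<le> B \<Longrightarrow> seminorm f \<le> B"
  by (rule cSup_least) auto

lemma Lnorm_eq: "nrm f = cmod (f r) + seminorm f"
  by (simp add: Lnorm_def)

lemma Lnorm_nonneg: "f \<in> Lk V E r k \<Longrightarrow> 0 \<le> nrm f"
  using seminorm_nonneg by (simp add: Lnorm_eq)

lemma wD_le_Lnorm: "f \<in> Lk V E r k \<Longrightarrow> v \<in> V - {r} \<Longrightarrow> W f v \<le> nrm f"
  using wD_le_seminorm[of f v] by (simp add: Lnorm_eq add_increasing)

lemma norm_root_le_Lnorm: "f \<in> Lk V E r k \<Longrightarrow> cmod (f r) \<le> nrm f"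
  using seminorm_nonneg by (simp add: Lnorm_eq)

lemma Lnorm_scale_le:
  assumes "f \<in> Lk V E r k"
  shows "nrm (\<lambda>w. a * f w) \<le> cmod a * nrm f"
proof -
  have "W (\<lambda>w. a * f w) v = cmod a * W f v" for v
    by (simp add: wD_eq norm_mult right_diff_distrib[symmetric])
  then have "seminorm (\<lambda>w. a * f w) \<le> cmod a * seminorm f"
    using wD_le_seminorm[OF assms] seminorm_nonneg[OF assms]
    by (intro seminorm_le) (auto intro: mult_left_mono)
  then show ?thesis
    by (simp add: Lnorm_eq norm_mult distrib_left)
qed

lemma mem_LkI: "(\<And>v. v \<in> V - {r} \<Longrightarrow> W f v \<le> B) \<Longrightarrow> f \<in> Lk V E r k"
  unfolding Lk_def by (rule CollectI, rule bdd_aboveI2)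

lemma mem_Lk0_if_eventually_le:
  assumes "f \<in> Lk V E r k" "g \<in> Lk0 V E r k"
    and "\<And>w. w \<in> V - {r} \<Longrightarrow> N \<le> dst w \<Longrightarrow> W f w \<le> W g w"
  shows "f \<in> Lk0 V E r k"
  unfolding Lk0_def
proof (intro CollectI conjI allI impI)
  fix \<epsilon> :: real
  assume "0 < \<epsilon>"
  then obtain M where "\<forall>w\<in>V - {r}. M \<le> dst w \<longrightarrow> W g w < \<epsilon>"
    using assms(2) unfolding Lk0_def by blast
  with assms(3) show "\<exists>M. \<forall>w\<in>V - {r}. M \<le> dst w \<longrightarrow> W f w < \<epsilon>"
    by (intro exI[of _ "max M N"]) force
qed (fact assms(1))

lemma zero_mem_Lk0: "(\<lambda>_. 0) \<in> Lk0 V E r k"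
  by (auto simp: Lk0_def Lk_def wD_eq)

lemma wD_indicator_le:
  assumes "w \<in> V - {r}"
  shows "W (indicator {u}) w \<le> weight k (dst u) + weight k (Suc (dst u))"
  using assms parent_neq[of w] dist_parent[of w] weight_nonneg[of k]
  by (cases "w = u"; cases "par w = u") (auto simp: wD_eq indicator_def)

lemma wD_indicator_eq_0: "w \<noteq> u \<Longrightarrow> par w \<noteq> u \<Longrightarrow> W (indicator {u}) w = 0"
  by (simp add: wD_eq indicator_def)

lemma indicator_mem_Lk0: "indicator {u} \<in> Lk0 V E r k"
proof (rule mem_Lk0_if_eventually_le)
  show "indicator {u} \<in> Lk V E r k"
    using wD_indicator_le by (rule mem_LkI)
  show "W (indicator {u}) w \<le> W (\<lambda>_. 0) w" if "w \<in> V - {r}" "Suc (Suc (dst u)) \<le> dst w" for w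
    using that far_vertex_not_self_or_child[of w u] by (simp add: wD_indicator_eq_0 wD_eq)
qed (fact zero_mem_Lk0)

lemma Lnorm_indicator_pos:
  assumes "u \<in> V"
  shows "0 < nrm (indicator {u} :: 'a \<Rightarrow> complex)"
proof (cases "u = r")
  case True
  then show ?thesis
    using seminorm_nonneg[of "indicator {u}"] indicator_mem_Lk0 by (simp add: Lk0_def Lnorm_eq)
next
  case False
  then have "0 < W (indicator {u}) u"
    using assms parent_neq[of u] weight_pos dist_pos by (simp add: wD_eq)
  also have "\<dots> \<le> nrm (indicator {u})"
    using assms False indicator_mem_Lk0 by (intro wD_le_Lnorm) (auto simp: Lk0_def)
  finally show ?thesis .
qed

lemma wD_lift_le:
  assumes v: "v \<in> V - {r}" and w: "w \<in> V - {r}"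
  shows "W (g(v := g (par v))) w \<le> W g w + 2 ^ Suc k * W g v"
proof -
  consider "w = v" | "w \<noteq> v" "par w = v" | "w \<noteq> v" "par w \<noteq> v"
    by blast
  then show ?thesis
  proof cases
    case 1
    then show ?thesis
      using wD_nonneg[of g] by (simp add: wD_eq)
  next
    case 2
    have "W (g(v := g (par v))) w = weight k (Suc (dst v)) * cmod (g w - g (par v))"
      using 2 w dist_parent[of w] by (simp add: wD_eq)
    also have "\<dots> \<le> weight k (Suc (dst v)) * (cmod (g w - g v) + cmod (g v - g (par v)))"
      using norm_triangle_ineq[of "g w - g v" "g v - g (par v)"] weight_nonneg
      by (intro mult_left_mono) auto
    also have "\<dots> \<le> W g w + 2 ^ Suc k * weight k (dst v) * cmod (g v - g (par v))"
      using 2 w dist_parent[of w] weight_Suc_le[OF dist_pos[of v]] v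
      by (simp add: wD_eq distrib_left mult_right_mono)
    finally show ?thesis
      by (simp add: wD_eq mult.assoc)
  next
    case 3
    then show ?thesis
      using wD_nonneg[of g v] by (simp add: wD_eq)
  qed
qed

lemma wD_lift_eq: "w \<noteq> v \<Longrightarrow> par w \<noteq> v \<Longrightarrow> W (g(v := g (par v))) w = W g w"
  by (simp add: wD_eq)

lemma wD_lift_le_seminorm:
  assumes g: "g \<in> Lk V E r k" and v: "v \<in> V - {r}" and w: "w \<in> V - {r}"
  shows "W (g(v := g (par v))) w \<le> (1 + 2 ^ Suc k) * seminorm g"
proof -
  have "W (g(v := g (par v))) w \<le> W g w + 2 ^ Suc k * W g v"
    by (rule wD_lift_le[OF v w])
  also have "\<dots> \<le> seminorm g + 2 ^ Suc k * seminorm g"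
    using wD_le_seminorm[OF g] v w by (intro add_mono mult_left_mono) auto
  finally show ?thesis
    by (simp add: distrib_right)
qed

lemma lift_mem_Lk: "g \<in> Lk V E r k \<Longrightarrow> v \<in> V - {r} \<Longrightarrow> g(v := g (par v)) \<in> Lk V E r k"
  using wD_lift_le_seminorm by (blast intro: mem_LkI)

lemma lift_mem_Lk0:
  assumes "g \<in> Lk0 V E r k" "v \<in> V - {r}"
  shows "g(v := g (par v)) \<in> Lk0 V E r k"
proof (rule mem_Lk0_if_eventually_le[OF _ assms(1)])
  show "g(v := g (par v)) \<in> Lk V E r k"
    using assms lift_mem_Lk by (simp add: Lk0_def)
  show "W (g(v := g (par v))) w \<le> W g w" if "w \<in> V - {r}" "Suc (Suc (dst v)) \<le> dst w" for w
    using that far_vertex_not_self_or_child[of w v] wD_lift_eq by simp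
qed

lemma Lnorm_lift_le:
  assumes "g \<in> Lk V E r k" "v \<in> V - {r}"
  shows "nrm (g(v := g (par v))) \<le> (1 + 2 ^ Suc k) * nrm g"
proof -
  have "seminorm (g(v := g (par v))) \<le> (1 + 2 ^ Suc k) * seminorm g"
    using wD_lift_le_seminorm[OF assms] seminorm_nonneg[OF assms(1)] by (intro seminorm_le) auto
  moreover have "cmod (g r) \<le> (1 + 2 ^ Suc k) * cmod (g r)"
    by (simp add: distrib_right)
  moreover have "r \<noteq> v"
    using assms(2) by blast
  ultimately show ?thesis
    by (simp add: Lnorm_eq distrib_left)
qed

end

locale Lk_space = weighted_tree +
  fixes X :: "('a \<Rightarrow> complex) set"
  assumes X: "X = Lk V E r k \<or> X = Lk0 V E r k"
begin

lemma subset_Lk: "X \<subseteq> Lk V E r k"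
  using X by (auto simp: Lk0_def)

lemma indicator_mem: "indicator {u} \<in> X"
  using X indicator_mem_Lk0 by (auto simp: Lk0_def)

lemma lift_mem: "g \<in> X \<Longrightarrow> v \<in> V - {r} \<Longrightarrow> g(v := g (par v)) \<in> X"
  using X lift_mem_Lk lift_mem_Lk0 by blast

lemma INF_pos_if_bounded_below:
  assumes "bounded_below_on X nrm (mult_op \<psi>)"
  shows "0 < (INF v\<in>V. cmod (\<psi> v))"
proof -
  obtain c where "0 < c" and c: "\<And>f. f \<in> X \<Longrightarrow> c * nrm f \<le> nrm (mult_op \<psi> f)"
    using assms unfolding bounded_below_on_def by blast
  have "c \<le> cmod (\<psi> u)" if "u \<in> V" for u
  proof -
    have "mult_op \<psi> (indicator {u}) = (\<lambda>w. \<psi> u * indicator {u} w)"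
      by (auto simp: mult_op_def indicator_def)
    then have "nrm (mult_op \<psi> (indicator {u})) \<le> cmod (\<psi> u) * nrm (indicator {u})"
      using Lnorm_scale_le subset_Lk indicator_mem by auto
    with c[OF indicator_mem[of u]] have "c * nrm (indicator {u}) \<le> cmod (\<psi> u) * nrm (indicator {u})"
      by linarith
    with Lnorm_indicator_pos[OF that] show ?thesis
      by simp
  qed
  then have "c \<le> (INF v\<in>V. cmod (\<psi> v))"
    using root by (intro cINF_greatest) auto
  with \<open>0 < c\<close> show ?thesis
    by linarith
qed

lemma wD_le_Lnorm_mult_op:
  assumes closed: "\<And>f. f \<in> X \<Longrightarrow> mult_op \<psi> f \<in> X"
    and C: "\<And>f. f \<in> X \<Longrightarrow> nrm (mult_op \<psi> f) \<le> C * nrm f" "0 \<le> C"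
    and c: "\<And>v. v \<in> V \<Longrightarrow> c \<le> cmod (\<psi> v)" and "0 < c"
    and f: "f \<in> X" and v: "v \<in> V - {r}"
  shows "W f v \<le> (1 / c + C * (1 + 2 ^ Suc k) / c\<^sup>2) * nrm (mult_op \<psi> f)"
proof -
  define g where "g = mult_op \<psi> f"
  define p where "p = par v"
  define h where "h = g(v := g p)"
  have p: "p \<in> V" "p \<noteq> v"
    using v parent_in_V parent_neq by (auto simp: p_def)
  have g: "g \<in> X" "g \<in> Lk V E r k"
    using closed[OF f] subset_Lk by (auto simp: g_def)
  have h: "h \<in> X" "h \<in> Lk V E r k"
    using lift_mem[OF g(1) v] subset_Lk by (auto simp: h_def p_def)
  have f_eq: "f w = g w / \<psi> w" if "w \<in> V" for w
    using c[OF that] \<open>0 < c\<close> by (auto simp: g_def mult_op_def)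
  have "cmod (f v - f p) \<le> cmod (g v - g p) / c + cmod (g p) * cmod (\<psi> v - \<psi> p) / c\<^sup>2"
    using norm_diff_divide_le[OF \<open>0 < c\<close> c c] v p by (simp add: f_eq)
  then have "W f v \<le> weight k (dst v) * (cmod (g v - g p) / c + cmod (g p) * cmod (\<psi> v - \<psi> p) / c\<^sup>2)"
    unfolding wD_eq p_def[symmetric] using weight_nonneg by (rule mult_left_mono)
  also have "\<dots> = W g v / c + W (mult_op \<psi> h) v / c\<^sup>2"
  proof -
    have "mult_op \<psi> h v - mult_op \<psi> h p = g p * (\<psi> v - \<psi> p)"
      using p(2) by (simp add: mult_op_def h_def algebra_simps)
    then show ?thesis
      by (simp add: wD_eq p_def[symmetric] norm_mult distrib_left mult.assoc)
  qed
  also have "\<dots> \<le> nrm g / c + C * ((1 + 2 ^ Suc k) * nrm g) / c\<^sup>2"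
  proof (intro add_mono divide_right_mono)
    show "W g v \<le> nrm g"
      using wD_le_Lnorm g(2) v by blast
    have "W (mult_op \<psi> h) v \<le> nrm (mult_op \<psi> h)"
      using wD_le_Lnorm subset_Lk closed[OF h(1)] v by blast
    also have "\<dots> \<le> C * nrm h"
      using C(1)[OF h(1)] .
    also have "\<dots> \<le> C * ((1 + 2 ^ Suc k) * nrm g)"
      using Lnorm_lift_le[OF g(2) v] C(2) by (simp add: h_def p_def mult_left_mono)
    finally show "W (mult_op \<psi> h) v \<le> C * ((1 + 2 ^ Suc k) * nrm g)" .
  qed (use \<open>0 < c\<close> in auto)
  finally show ?thesis
    by (simp add: g_def algebra_simps)
qed

lemma Lnorm_le_Lnorm_mult_op:
  assumes closed: "\<And>f. f \<in> X \<Longrightarrow> mult_op \<psi> f \<in> X"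
    and C: "\<And>f. f \<in> X \<Longrightarrow> nrm (mult_op \<psi> f) \<le> C * nrm f" "0 \<le> C"
    and c: "\<And>v. v \<in> V \<Longrightarrow> c \<le> cmod (\<psi> v)" and "0 < c"
    and f: "f \<in> X"
  shows "nrm f \<le> (2 / c + C * (1 + 2 ^ Suc k) / c\<^sup>2) * nrm (mult_op \<psi> f)"
proof -
  have g: "mult_op \<psi> f \<in> Lk V E r k"
    using closed[OF f] subset_Lk by blast
  have "c * cmod (f r) \<le> cmod (mult_op \<psi> f r)"
    using c[OF root] by (simp add: mult_op_def norm_mult mult_right_mono)
  also have "\<dots> \<le> nrm (mult_op \<psi> f)"
    using norm_root_le_Lnorm[OF g] .
  finally have "cmod (f r) \<le> nrm (mult_op \<psi> f) / c"
    using \<open>0 < c\<close> by (simp add: field_simps)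
  moreover have "seminorm f \<le> (1 / c + C * (1 + 2 ^ Suc k) / c\<^sup>2) * nrm (mult_op \<psi> f)"
    using wD_le_Lnorm_mult_op[OF closed C c \<open>0 < c\<close> f] Lnorm_nonneg[OF g] C(2) \<open>0 < c\<close>
    by (intro seminorm_le) auto
  ultimately show ?thesis
    by (simp add: Lnorm_eq algebra_simps add_divide_distrib)
qed

lemma bounded_below_if_INF_pos:
  assumes "bounded_mult_on X nrm \<psi>" and "0 < (INF v\<in>V. cmod (\<psi> v))"
  shows "bounded_below_on X nrm (mult_op \<psi>)"
proof -
  obtain C where closed: "\<And>f. f \<in> X \<Longrightarrow> mult_op \<psi> f \<in> X"
    and C: "\<And>f. f \<in> X \<Longrightarrow> nrm (mult_op \<psi> f) \<le> C * nrm f"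
    using assms(1) unfolding bounded_mult_on_def by blast
  have C': "nrm (mult_op \<psi> f) \<le> max C 0 * nrm f" if "f \<in> X" for f
  proof -
    have "C * nrm f \<le> max C 0 * nrm f"
      using Lnorm_nonneg subset_Lk that by (intro mult_right_mono) auto
    with C[OF that] show ?thesis
      by linarith
  qed
  define c where "c = (INF v\<in>V. cmod (\<psi> v))"
  have c: "c \<le> cmod (\<psi> v)" if "v \<in> V" for v
    unfolding c_def by (rule cINF_lower[OF bdd_belowI2[of _ 0] that]) simp
  define K where "K = 2 / c + max C 0 * (1 + 2 ^ Suc k) / c\<^sup>2"
  have "0 < c"
    using assms(2) by (simp add: c_def)
  then have "0 < K"
    by (simp add: K_def add_pos_nonneg)
  moreover have "nrm f \<le> K * nrm (mult_op \<psi> f)" if "f \<in> X" for f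
    unfolding K_def using Lnorm_le_Lnorm_mult_op[OF closed C' _ c \<open>0 < c\<close> that] by simp
  ultimately show ?thesis
    unfolding bounded_below_on_def
    by (intro exI[of _ "1 / K"]) (auto simp: field_simps)
qed

end

theorem theorem4p4:
  fixes V :: "'a set" and E :: "'a \<Rightarrow> 'a \<Rightarrow> bool" and r :: 'a
    and k :: nat and \<psi> :: "'a \<Rightarrow> complex" and X :: "('a \<Rightarrow> complex) set"
  assumes tree: "is_tree V E" and lf: "locally_finite V E"
    and nt: "no_terminal_vertices V E" and root: "r \<in> V"
    and X: "X = Lk V E r k \<or> X = Lk0 V E r k"
    and bdd: "bounded_mult_on X (Lnorm V E r k) \<psi>"
  shows "bounded_below_on X (Lnorm V E r k) (mult_op \<psi>) \<longleftrightarrow> (INF v\<in>V. cmod (\<psi> v)) > 0"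
proof -
  interpret Lk_space V E r k X
    using tree root X by unfold_locales
  show ?thesis
    using INF_pos_if_bounded_below bounded_below_if_INF_pos[OF bdd] by blast
qed

end
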